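(* There exist a ranked alphabet $\Sigma$ and a $(\Sigma,\mathrm{TSR})$-wta $\mathcal{A}$ such that $[\![\mathcal{A}]\!]^{\mathrm{init}}$ is i-recognizable by a crisp-deterministic $(\Sigma,\mathrm{TSR})$-wta and $\mathcal{N}(\mathcal{A})$ is not finite.
   Context: $\mathrm{TSR}=(\mathbb{N}\cup\{\infty\},\min,+,\infty,0)$ is the tropical semiring (addition $\min$ with neutral element $\infty$, multiplication $+$ with neutral element $0$). A ranked alphabet $\Sigma$ is a finite set of symbols with ranks, $\Sigma^{(k)}$ the symbols of rank $k$, $\Sigma^{(0)}\ne\emptyset$; $T_\Sigma$ is the set of trees. A $(\Sigma,B)$-wta over a strong bimonoid $(B,\oplus,\otimes,\mathbb{0},\mathbb{1})$ is $\mathcal{A}=(Q,\delta,F)$: $Q$ finite nonempty, $\delta_k:Q^k\times\Sigma^{(k)}\times Q\to B$, $F:Q\to B$. Vector algebra $\mathrm{V}(\mathcal{A})=(B^Q,\delta_{\mathcal{A}})$, $\delta_{\mathcal{A}}(\sigma)(v_1,\dots,v_k)_q=\bigoplus_{q_1,\dots,q_k}\big(\bigotimes_{i=1}^k(v_i)_{q_i}\big)\otimes\delta_k(q_1\dots q_k,\sigma,q)$; $h_{\mathrm{V}(\mathcal{A})}:T_\Sigma\to B^Q$ the unique homomorphism; $[\![\mathcal{A}]\!]^{\mathrm{init}}(\xi)=\bigoplus_q h_{\mathrm{V}(\mathcal{A})}(\xi)_q\otimes F_q$; a weighted tree language $r$ is i-recognizable by $\mathcal{A}$ if $r=[\![\mathcal{A}]\!]^{\mathrm{init}}$.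 Crisp-deterministic: for all $k,\sigma\in\Sigma^{(k)},q_1,\dots,q_k$ a unique $q$ with $\delta_k(q_1\dots q_k,\sigma,q)=\mathbb{1}$ and all other values $\mathbb{0}$. The Nerode algebra $\mathcal{N}(\mathcal{A})$ has as carrier the smallest subset of $B^Q$ closed under all operations $\delta_{\mathcal{A}}(\sigma)$ (equivalently $\mathrm{im}(h_{\mathrm{V}(\mathcal{A})})$), with restricted operations and root weights $v\mapsto\bigoplus_q v_q\otimes F_q$; it is finite if this carrier is finite. *)

theory Defs
  imports Main "HOL-Library.Extended_Nat"
begin

text \<open>Tropical semiring TSR = (nat \<union> {\<infinity>}, min, +, \<infinity>, 0), realised as enat:
  the semiring sum (min, big sum = INF, neutral \<infinity>) and product (+, neutral 0).\<close>

datatype 'f tree = Node 'f "'f tree list"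

definition ranked_alphabet :: "'f set \<Rightarrow> ('f \<Rightarrow> nat) \<Rightarrow> bool" where
  "ranked_alphabet \<Sigma> rk \<longleftrightarrow> finite \<Sigma> \<and> (\<exists>f\<in>\<Sigma>. rk f = 0)"

fun wf_tree :: "'f set \<Rightarrow> ('f \<Rightarrow> nat) \<Rightarrow> 'f tree \<Rightarrow> bool" where
  "wf_tree \<Sigma> rk (Node f ts) \<longleftrightarrow> f \<in> \<Sigma> \<and> length ts = rk f \<and> (\<forall>t\<in>set ts. wf_tree \<Sigma> rk t)"

text \<open>A (\<Sigma>,TSR)-wta (Q, \<delta>, F): Q a finite nonempty state set, \<delta> qs \<sigma> q the weight
  \<delta>_k(q1..qk, \<sigma>, q), F the root weights.  Values outside Q / \<Sigma> are irrelevant.\<close>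
definition wta :: "'q set \<Rightarrow> bool" where
  "wta Q \<longleftrightarrow> finite Q \<and> Q \<noteq> {}"

definition state_lists :: "'q set \<Rightarrow> nat \<Rightarrow> 'q list set" where
  "state_lists Q k = {qs. length qs = k \<and> set qs \<subseteq> Q}"

fun hV :: "'q set \<Rightarrow> ('q list \<Rightarrow> 'f \<Rightarrow> 'q \<Rightarrow> enat) \<Rightarrow> 'f tree \<Rightarrow> 'q \<Rightarrow> enat" where
  "hV Q \<delta> (Node \<sigma> ts) =
     (let vs = map (hV Q \<delta>) ts in
      (\<lambda>q. if q \<in> Q then
              (INF qs \<in> state_lists Q (length ts).
                 sum_list (map2 (\<lambda>v p. v p) vs qs) + \<delta> qs \<sigma> q)
           else \<infinity>))"

definition run_init :: "'q set \<Rightarrow> ('q list \<Rightarrow> 'f \<Rightarrow> 'q \<Rightarrow> enat) \<Rightarrow> ('q \<Rightarrow> enat) \<Rightarrow> 'f tree \<Rightarrow> enat" where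
  "run_init Q \<delta> F \<xi> = (INF q \<in> Q. hV Q \<delta> \<xi> q + F q)"

definition i_recognizes :: "'f set \<Rightarrow> ('f \<Rightarrow> nat) \<Rightarrow> 'q set \<Rightarrow> ('q list \<Rightarrow> 'f \<Rightarrow> 'q \<Rightarrow> enat)
    \<Rightarrow> ('q \<Rightarrow> enat) \<Rightarrow> ('f tree \<Rightarrow> enat) \<Rightarrow> bool" where
  "i_recognizes \<Sigma> rk Q \<delta> F r \<longleftrightarrow> wta Q \<and> (\<forall>\<xi>. wf_tree \<Sigma> rk \<xi> \<longrightarrow> r \<xi> = run_init Q \<delta> F \<xi>)"

text \<open>Crisp-deterministic: for each \<sigma> and q1..qk exactly one q has weight 1 (= 0 in TSR),
  all others weight 0 (= \<infinity> in TSR).\<close>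
definition crisp_det :: "'f set \<Rightarrow> ('f \<Rightarrow> nat) \<Rightarrow> 'q set \<Rightarrow> ('q list \<Rightarrow> 'f \<Rightarrow> 'q \<Rightarrow> enat) \<Rightarrow> bool" where
  "crisp_det \<Sigma> rk Q \<delta> \<longleftrightarrow>
     (\<forall>\<sigma>\<in>\<Sigma>. \<forall>qs\<in>state_lists Q (rk \<sigma>).
        \<exists>!q. q \<in> Q \<and> \<delta> qs \<sigma> q = 0 \<and> (\<forall>q'\<in>Q. q' \<noteq> q \<longrightarrow> \<delta> qs \<sigma> q' = \<infinity>))"

definition nerode_carrier :: "'f set \<Rightarrow> ('f \<Rightarrow> nat) \<Rightarrow> 'q set \<Rightarrow> ('q list \<Rightarrow> 'f \<Rightarrow> 'q \<Rightarrow> enat) \<Rightarrow> ('q \<Rightarrow> enat) set" where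
  "nerode_carrier \<Sigma> rk Q \<delta> = hV Q \<delta> ` {\<xi>. wf_tree \<Sigma> rk \<xi>}"

end

theory Submission
  imports Defs
begin

text \<open>Take a unary symbol \<open>\<gamma>\<close> and a constant \<open>\<alpha>\<close>, and a tropical wta with two states: state
  \<open>0\<close> counts the \<open>\<gamma>\<close>'s at weight \<open>1\<close> each, state \<open>1\<close> reads every tree at weight \<open>0\<close>.  The
  weight vector of \<open>\<gamma>\<^sup>n(\<alpha>)\<close> is \<open>(n, 0)\<close>, so the Nerode algebra is infinite.  With both root
  weights \<open>0\<close>, however, the semantics is \<open>min n 0 = 0\<close> on every tree, and this constant is
  recognized by the one-state crisp-deterministic wta.\<close>

lemma state_lists_0: "state_lists Q 0 = {[]}"
  by (auto simp: state_lists_def)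

lemma state_lists_singleton: "state_lists {q} k = {replicate k q}"
  by (auto simp: state_lists_def intro: replicate_eqI)

lemma state_lists_Suc_0: "state_lists Q (Suc 0) = (\<lambda>q. [q]) ` Q"
  by (auto simp: state_lists_def length_Suc_conv)

lemma hV_nullary_Node: "hV Q \<delta> (Node \<sigma> []) q = (if q \<in> Q then \<delta> [] \<sigma> q else \<infinity>)"
  by (simp add: state_lists_0)

lemma hV_unary_Node:
  "hV Q \<delta> (Node \<sigma> [t]) q = (if q \<in> Q then INF p \<in> Q. hV Q \<delta> t p + \<delta> [p] \<sigma> q else \<infinity>)"
  by (simp add: state_lists_Suc_0 image_image)

lemma hV_trivial_wta: "hV {q} (\<lambda>_ _ _. 0) \<xi> = (\<lambda>p. if p = q then 0 else \<infinity>)"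
proof (induction \<xi>)
  case (Node \<sigma> ts)
  have "sum_list (map2 (\<lambda>v p. v p) (map (hV {q} (\<lambda>_ _ _. 0)) ts) (replicate (length ts) q)) = 0"
    using Node.IH by (induction ts) auto
  then have "hV {q} (\<lambda>_ _ _. 0) (Node \<sigma> ts) q = 0"
    by (simp add: state_lists_singleton del: sum_list_eq_0_iff)
  then show ?case
    by (intro ext) simp
qed

lemma crisp_det_trivial_wta: "crisp_det \<Sigma> rk {q} (\<lambda>_ _ _. 0)"
  by (auto simp: crisp_det_def)

lemma i_recognizes_trivial_wta:
  assumes "\<And>\<xi>. wf_tree \<Sigma> rk \<xi> \<Longrightarrow> r \<xi> = c"
  shows "i_recognizes \<Sigma> rk {q} (\<lambda>_ _ _. 0) (\<lambda>_. c) r"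
  using assms by (simp add: i_recognizes_def wta_def run_init_def hV_trivial_wta)

lemma infinite_nerode_carrierI:
  fixes t :: "nat \<Rightarrow> 'f tree"
  assumes "\<And>n. wf_tree \<Sigma> rk (t n)" and "inj (\<lambda>n. hV Q \<delta> (t n) q)"
  shows "infinite (nerode_carrier \<Sigma> rk Q \<delta>)"
proof
  assume "finite (nerode_carrier \<Sigma> rk Q \<delta>)"
  moreover have "range (\<lambda>n. hV Q \<delta> (t n)) \<subseteq> nerode_carrier \<Sigma> rk Q \<delta>"
    using assms(1) by (auto simp: nerode_carrier_def)
  ultimately have "finite (range (\<lambda>n. hV Q \<delta> (t n)))"
    by (rule finite_subset[rotated])
  then have "finite ((\<lambda>v. v q) ` range (\<lambda>n. hV Q \<delta> (t n)))"
    by (rule finite_imageI)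
  then have "finite (range (\<lambda>n. hV Q \<delta> (t n) q))"
    by (simp add: image_image)
  with range_inj_infinite[OF assms(2)] show False
    by contradiction
qed

text \<open>Symbols are natural numbers of rank equal to themselves: \<open>0\<close> is \<open>\<alpha>\<close> and \<open>1\<close> is \<open>\<gamma>\<close>.\<close>

fun unary_tree :: "nat \<Rightarrow> nat tree" where
  "unary_tree 0 = Node 0 []"
| "unary_tree (Suc n) = Node 1 [unary_tree n]"

lemma wf_tree_unary_iff: "wf_tree {0, 1} (\<lambda>\<sigma>. \<sigma>) \<xi> \<longleftrightarrow> (\<exists>n. \<xi> = unary_tree n)"
proof
  show "wf_tree {0, 1} (\<lambda>\<sigma>. \<sigma>) \<xi> \<Longrightarrow> \<exists>n. \<xi> = unary_tree n"
  proof (induction \<xi>)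
    case (Node \<sigma> ts)
    show ?case
    proof (cases "\<sigma> = 0")
      case True
      with Node.prems show ?thesis
        by (metis unary_tree.simps(1) length_0_conv wf_tree.simps)
    next
      case False
      with Node.prems obtain t where "ts = [t]" "wf_tree {0, 1} (\<lambda>\<sigma>. \<sigma>) t" "\<sigma> = 1"
        by (auto simp: length_Suc_conv)
      with Node.IH obtain n where "t = unary_tree n"
        by auto
      with \<open>ts = [t]\<close> \<open>\<sigma> = 1\<close> show ?thesis
        by (metis unary_tree.simps(2))
    qed
  qed
  show "\<exists>n. \<xi> = unary_tree n \<Longrightarrow> wf_tree {0, 1} (\<lambda>\<sigma>. \<sigma>) \<xi>"
  proof (elim exE)
    fix n show "\<xi> = unary_tree n \<Longrightarrow> wf_tree {0, 1} (\<lambda>\<sigma>. \<sigma>) \<xi>"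
      by (induction n arbitrary: \<xi>) auto
  qed
qed

definition counter_delta :: "nat list \<Rightarrow> nat \<Rightarrow> nat \<Rightarrow> enat" where
  "counter_delta qs \<sigma> q =
     (if \<sigma> = 0 then 0 else if qs = [q] then (if q = 0 then 1 else 0) else \<infinity>)"

lemma hV_counter_state_0: "hV {0, 1} counter_delta (unary_tree n) 0 = enat n"
  by (induction n)
    (simp_all add: hV_nullary_Node hV_unary_Node counter_delta_def zero_enat_def one_enat_def inf_min
      del: hV.simps)

lemma hV_counter_state_1: "hV {0, 1} counter_delta (unary_tree n) 1 = 0"
  by (induction n) (simp_all add: hV_nullary_Node hV_unary_Node counter_delta_def inf_min del: hV.simps)

lemma run_init_counter:
  assumes "wf_tree {0, 1} (\<lambda>\<sigma>. \<sigma>) \<xi>"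
  shows "run_init {0, 1} counter_delta (\<lambda>_. 0) \<xi> = 0"
proof -
  from assms obtain n where "\<xi> = unary_tree n"
    using wf_tree_unary_iff by blast
  then show ?thesis
    using hV_counter_state_0[of n] hV_counter_state_1[of n] by (simp add: run_init_def inf_min)
qed

theorem lemma6p6:
  shows "\<exists>(\<Sigma>::nat set) rk (Q::nat set) \<delta> F.
     ranked_alphabet \<Sigma> rk \<and> wta Q \<and>
     (\<exists>(Q'::nat set) \<delta>' F'. crisp_det \<Sigma> rk Q' \<delta>' \<and>
        i_recognizes \<Sigma> rk Q' \<delta>' F' (run_init Q \<delta> F)) \<and>
     \<not> finite (nerode_carrier \<Sigma> rk Q \<delta>)"
proof (intro exI conjI)
  show "ranked_alphabet {0, 1} (\<lambda>\<sigma>. \<sigma>)"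
    by (simp add: ranked_alphabet_def)
  show "wta {0, 1::nat}"
    by (simp add: wta_def)
  show "crisp_det {0, 1} (\<lambda>\<sigma>. \<sigma>) {0::nat} (\<lambda>_ _ _. 0)"
    by (rule crisp_det_trivial_wta)
  show "i_recognizes {0, 1} (\<lambda>\<sigma>. \<sigma>) {0::nat} (\<lambda>_ _ _. 0) (\<lambda>_. 0)
      (run_init {0, 1} counter_delta (\<lambda>_. 0))"
    by (rule i_recognizes_trivial_wta) (rule run_init_counter)
  show "\<not> finite (nerode_carrier {0, 1} (\<lambda>\<sigma>. \<sigma>) {0, 1} counter_delta)"
  proof (rule infinite_nerode_carrierI)
    show "wf_tree {0, 1} (\<lambda>\<sigma>. \<sigma>) (unary_tree n)" for n
      unfolding wf_tree_unary_iff by blast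
    show "inj (\<lambda>n. hV {0, 1} counter_delta (unary_tree n) 0)"
      unfolding hV_counter_state_0 by (simp add: inj_def)
  qed
qed

end
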